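(* Let $X$ be a rearrangement invariant space on $(0,\infty)$ with the Fatou property such that $L_\infty\hookrightarrow X$ and the Cesàro operator $C$ is bounded on $X$. Suppose also that $X$ satisfies: for every $f\in X$ and every measurable $A\subset(0,\infty)$ with $m(A)<\infty$, $f\chi_A\in X_a$. Then the Cesàro space $CX$ contains a lattice isometric copy of $\ell_\infty$.
   Context: A rearrangement invariant space on $(0,\infty)$ is a Banach space $X\subset L_0(0,\infty)$ with the ideal property ($|f|\le|g|$ a.e., $g\in X$ imply $f\in X$, $\|f\|_X\le\|g\|_X$), containing an a.e. positive function, in which equimeasurable functions have equal norms. Fatou property: $0\le f_n\uparrow f$ a.e., $\sup\|f_n\|_X<\infty$ imply $f\in X$ and $\|f_n\|_X\uparrow\|f\|_X$. $X_a$ is the ideal of order continuous elements ($f\in X_a$ iff $0\le f_n\le|f|$, $f_n\downarrow0$ a.e. imply $\|f_n\|_X\to0$). $m$ is Lebesgue measure. $C(f)(x)=\frac1x\int_0^x|f(t)|\,dt$; $CX=\{f: C(|f|)\in X\}$ with $\|f\|_{CX}=\|C(|f|)\|_X$. A lattice isometric copy of $\ell_\infty$ is the image of a linear isometric lattice-homomorphic embedding of $\ell_\infty$. *)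

theory Defs
  imports "HOL-Analysis.Analysis"
begin

text \<open>Functions on (0,infinity) are represented by real-valued functions on the reals;
  only their values on {0<..} matter, and everything is modulo equality a.e.
  A rearrangement invariant space X is represented by its norm functional
  rho, extended by infinity outside X: X = {f measurable. rho f < infinity}.\<close>

type_synonym rfun = "real \<Rightarrow> real"

abbreviation M0 :: "real measure" where
  "M0 \<equiv> lebesgue_on {0<..}"

definition Mfun :: "rfun set" where
  "Mfun = borel_measurable M0"

definition in_X :: "(rfun \<Rightarrow> ennreal) \<Rightarrow> rfun \<Rightarrow> bool" where
  "in_X \<rho> f \<longleftrightarrow> f \<in> Mfun \<and> \<rho> f < \<infinity>"

definition ri_space :: "(rfun \<Rightarrow> ennreal) \<Rightarrow> bool" where
  "ri_space \<rho> \<longleftrightarrow>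
     (\<forall>f\<in>Mfun. \<forall>g\<in>Mfun. (AE x in M0. \<bar>f x\<bar> \<le> \<bar>g x\<bar>) \<longrightarrow> \<rho> f \<le> \<rho> g)
   \<and> (\<forall>f\<in>Mfun. \<rho> f = 0 \<longleftrightarrow> (AE x in M0. f x = 0))
   \<and> (\<forall>f\<in>Mfun. \<forall>c::real. \<rho> (\<lambda>x. c * f x) = ennreal \<bar>c\<bar> * \<rho> f)
   \<and> (\<forall>f\<in>Mfun. \<forall>g\<in>Mfun. \<rho> (\<lambda>x. f x + g x) \<le> \<rho> f + \<rho> g)
   \<and> (\<forall>F::nat \<Rightarrow> rfun. (\<forall>n. in_X \<rho> (F n)) \<and>
        (\<forall>e>0. \<exists>N. \<forall>m\<ge>N. \<forall>n\<ge>N. \<rho> (\<lambda>x. F m x - F n x) < ennreal e)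
        \<longrightarrow> (\<exists>f. in_X \<rho> f \<and> (\<lambda>n. \<rho> (\<lambda>x. F n x - f x)) \<longlonglongrightarrow> 0))
   \<and> (\<exists>f. in_X \<rho> f \<and> (AE x in M0. f x > 0))
   \<and> (\<forall>f\<in>Mfun. \<forall>g\<in>Mfun.
        (\<forall>s::real. emeasure M0 {x\<in>{0<..}. s < \<bar>f x\<bar>} = emeasure M0 {x\<in>{0<..}. s < \<bar>g x\<bar>})
        \<longrightarrow> \<rho> f = \<rho> g)"

definition fatou_property :: "(rfun \<Rightarrow> ennreal) \<Rightarrow> bool" where
  "fatou_property \<rho> \<longleftrightarrow>
     (\<forall>F::nat \<Rightarrow> rfun. \<forall>f. (\<forall>n. F n \<in> Mfun) \<and> f \<in> Mfun \<and>
        (AE x in M0. \<forall>n. 0 \<le> F n x \<and> F n x \<le> F (Suc n) x) \<and>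
        (AE x in M0. (\<lambda>n. F n x) \<longlonglongrightarrow> f x)
        \<longrightarrow> \<rho> f = (SUP n. \<rho> (F n)))"

definition Linf_embeds :: "(rfun \<Rightarrow> ennreal) \<Rightarrow> bool" where
  "Linf_embeds \<rho> \<longleftrightarrow> (\<forall>f\<in>Mfun. (\<exists>B. AE x in M0. \<bar>f x\<bar> \<le> B) \<longrightarrow> \<rho> f < \<infinity>)"

definition in_Xa :: "(rfun \<Rightarrow> ennreal) \<Rightarrow> rfun \<Rightarrow> bool" where
  "in_Xa \<rho> f \<longleftrightarrow> in_X \<rho> f \<and>
     (\<forall>F::nat \<Rightarrow> rfun. (\<forall>n. F n \<in> Mfun) \<and>
        (AE x in M0. \<forall>n. 0 \<le> F n x \<and> F n x \<le> \<bar>f x\<bar> \<and> F (Suc n) x \<le> F n x) \<and>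
        (AE x in M0. (\<lambda>n. F n x) \<longlonglongrightarrow> 0)
        \<longrightarrow> (\<lambda>n. \<rho> (F n)) \<longlonglongrightarrow> 0)"

definition cesaro_int :: "rfun \<Rightarrow> real \<Rightarrow> ennreal" where
  "cesaro_int f x = (\<integral>\<^sup>+ t. ennreal \<bar>f t\<bar> * indicator {0<..<x} t \<partial>lborel)"

definition cesaro_finite :: "rfun \<Rightarrow> bool" where
  "cesaro_finite f \<longleftrightarrow> (\<forall>x>0. cesaro_int f x < \<infinity>)"

definition cesaro :: "rfun \<Rightarrow> rfun" where
  "cesaro f x = (if x > 0 then (1 / x) * enn2real (cesaro_int f x) else 0)"

definition cesaro_bounded :: "(rfun \<Rightarrow> ennreal) \<Rightarrow> bool" where
  "cesaro_bounded \<rho> \<longleftrightarrow> (\<exists>K::real. \<forall>f. in_X \<rho> f \<longrightarrow>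
       cesaro_finite f \<and> cesaro f \<in> Mfun \<and> \<rho> (cesaro f) \<le> ennreal K * \<rho> f)"

definition cesaro_norm :: "(rfun \<Rightarrow> ennreal) \<Rightarrow> rfun \<Rightarrow> ennreal" where
  "cesaro_norm \<rho> f = (if cesaro_finite f then \<rho> (cesaro f) else \<infinity>)"

definition in_CX :: "(rfun \<Rightarrow> ennreal) \<Rightarrow> rfun \<Rightarrow> bool" where
  "in_CX \<rho> f \<longleftrightarrow> f \<in> Mfun \<and> cesaro_norm \<rho> f < \<infinity>"

definition linf :: "(nat \<Rightarrow> real) set" where
  "linf = {a. bounded (range a)}"

definition contains_lattice_isometric_linf :: "(rfun \<Rightarrow> ennreal) \<Rightarrow> bool" where
  "contains_lattice_isometric_linf \<rho> \<longleftrightarrow>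
    (\<exists>T :: (nat \<Rightarrow> real) \<Rightarrow> rfun. \<forall>a\<in>linf. \<forall>b\<in>linf. \<forall>c::real.
        in_CX \<rho> (T a)
      \<and> cesaro_norm \<rho> (T a) = ennreal (SUP n. \<bar>a n\<bar>)
      \<and> (AE x in M0. T (\<lambda>n. a n + b n) x = T a x + T b x)
      \<and> (AE x in M0. T (\<lambda>n. c * a n) x = c * T a x)
      \<and> (AE x in M0. T (\<lambda>n. max (a n) (b n)) x = max (T a x) (T b x)))"

end

theory Submission
  imports Defs
begin

text \<open>Cut (0, infinity) into the blocks (e^(m^2), e^((m+1)^2)) and hand block m to the coordinate
  fst (prod_decode m): every coordinate then owns infinitely many blocks, and the ratio e^(2m+1)
  of the endpoints of block m tends to infinity. Let T a be a_n / ||1||_X on the blocks of n.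
  Pointwise, C(T a) is at most sup |a_n| / ||1||_X, and it is at least q |a_n| / ||1||_X at every
  point x of a block (c, d) of n with c < (1 - q) x. These points form a set of infinite measure,
  whose indicator is therefore equimeasurable with 1, so ||C(T a)||_X is at least q |a_n| for
  every q < 1.\<close>

lemma ennreal_eq_top_if_of_nat_le:
  fixes x :: ennreal
  assumes "\<And>n::nat. of_nat n \<le> x"
  shows "x = \<infinity>"
proof -
  have "(SUP n. of_nat n :: ennreal) \<le> x"
    using assms by (rule SUP_least)
  then show ?thesis
    by (simp add: ennreal_SUP_of_nat_eq_top top_unique)
qed

lemma const_in_Mfun: "(\<lambda>x. c) \<in> Mfun"
  unfolding Mfun_def by simp

lemma indicator_in_Mfun: "A \<in> sets M0 \<Longrightarrow> indicator A \<in> Mfun"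
  unfolding Mfun_def by simp

lemma ri_space_mono:
  assumes "ri_space \<rho>" "f \<in> Mfun" "g \<in> Mfun" "\<And>x. 0 < x \<Longrightarrow> \<bar>f x\<bar> \<le> \<bar>g x\<bar>"
  shows "\<rho> f \<le> \<rho> g"
proof -
  have "AE x in M0. \<bar>f x\<bar> \<le> \<bar>g x\<bar>"
    using assms(4) by (intro AE_I2) simp
  then show ?thesis
    using assms(1-3) unfolding ri_space_def by blast
qed

lemma ri_space_scale:
  assumes "ri_space \<rho>" "f \<in> Mfun"
  shows "\<rho> (\<lambda>x. c * f x) = ennreal \<bar>c\<bar> * \<rho> f"
  using assms unfolding ri_space_def by blast

lemma ri_space_eq_0_iff:
  assumes "ri_space \<rho>" "f \<in> Mfun"
  shows "\<rho> f = 0 \<longleftrightarrow> (AE x in M0. f x = 0)"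
  using assms unfolding ri_space_def by blast

lemma ri_space_equimeasurable:
  assumes "ri_space \<rho>" "f \<in> Mfun" "g \<in> Mfun"
    and "\<And>s. emeasure M0 {x\<in>{0<..}. s < \<bar>f x\<bar>} = emeasure M0 {x\<in>{0<..}. s < \<bar>g x\<bar>}"
  shows "\<rho> f = \<rho> g"
proof -
  have "\<forall>f\<in>Mfun. \<forall>g\<in>Mfun.
      (\<forall>s. emeasure M0 {x\<in>{0<..}. s < \<bar>f x\<bar>} = emeasure M0 {x\<in>{0<..}. s < \<bar>g x\<bar>}) \<longrightarrow> \<rho> f = \<rho> g"
    using assms(1) unfolding ri_space_def by (elim conjE)
  then show ?thesis
    using assms(2-4) by blast
qed

lemma Linf_embeds_const:
  assumes "Linf_embeds \<rho>"
  shows "\<rho> (\<lambda>x. c) < \<infinity>"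
proof -
  have "\<forall>f\<in>Mfun. (\<exists>B. AE x in M0. \<bar>f x\<bar> \<le> B) \<longrightarrow> \<rho> f < \<infinity>"
    using assms unfolding Linf_embeds_def .
  from bspec[OF this const_in_Mfun] show ?thesis
    by auto
qed

lemma ri_space_const:
  assumes "ri_space \<rho>"
  shows "\<rho> (\<lambda>x. c) = ennreal \<bar>c\<bar> * \<rho> (\<lambda>x. 1)"
  using ri_space_scale[OF assms const_in_Mfun, of c 1] by simp

lemma ri_space_indicator_of_infinite_measure:
  assumes "ri_space \<rho>" "A \<in> sets M0" "emeasure M0 A = \<infinity>"
  shows "\<rho> (indicator A) = \<rho> (\<lambda>x. 1)"
proof -
  have A: "A \<subseteq> {0<..}"
    using sets.sets_into_space[OF assms(2)] by simp
  then have "emeasure M0 A \<le> emeasure M0 {0<..}"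
    by (intro emeasure_mono) auto
  then have Ioi: "emeasure M0 {0<..} = \<infinity>"
    using assms(3) by (simp add: top_unique)
  have equimeasurable:
    "emeasure M0 {x\<in>{0<..}. s < \<bar>indicator A x :: real\<bar>} = emeasure M0 {x\<in>{0<..}. s < \<bar>1 :: real\<bar>}"
    for s :: real
  proof -
    have lhs: "{x\<in>{0<..}. s < \<bar>indicator A x :: real\<bar>} = (if s < 0 then {0<..} else if s < 1 then A else {})"
      using A by (auto simp: indicator_def)
    have rhs: "{x\<in>{0<..}. s < \<bar>1 :: real\<bar>} = (if s < 1 then {0<..} else {})"
      by auto
    show ?thesis
      unfolding lhs rhs using assms(3) Ioi by simp
  qed
  show ?thesis
    by (rule ri_space_equimeasurable[OF assms(1) indicator_in_Mfun[OF assms(2)] const_in_Mfun equimeasurable])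
qed

lemma ri_space_one_nonzero:
  assumes "ri_space \<rho>" "A \<in> sets M0" "emeasure M0 A = \<infinity>"
  shows "\<rho> (\<lambda>x. 1) \<noteq> 0"
proof
  assume "\<rho> (\<lambda>x. 1) = 0"
  then have "AE x in M0. indicator A x = (0::real)"
    using ri_space_indicator_of_infinite_measure[OF assms]
      ri_space_eq_0_iff[OF assms(1) indicator_in_Mfun[OF assms(2)]] by simp
  then have "AE x in M0. x \<notin> A"
    by (simp add: indicator_eq_0_iff)
  moreover have "{x \<in> space M0. \<not> x \<notin> A} = A"
    using sets.sets_into_space[OF assms(2)] by auto
  ultimately have "emeasure M0 A = 0"
    using AE_iff_measurable[OF assms(2)] by simp
  then show False
    using assms(3) by simp
qed

definition block :: "real \<Rightarrow> nat" where
  "block x = nat \<lfloor>sqrt (ln x)\<rfloor>"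

lemma block_measurable[measurable]: "block \<in> borel \<rightarrow>\<^sub>M count_space UNIV"
  unfolding block_def by measurable

lemma block_eq:
  assumes "exp (real m ^ 2) < x" "x < exp (real (Suc m) ^ 2)"
  shows "block x = m"
proof -
  have "0 < x"
    using assms(1) exp_gt_zero less_trans by blast
  then have "real m ^ 2 < ln x" "ln x < real (Suc m) ^ 2"
    using assms by (metis ln_exp ln_less_cancel_iff exp_gt_zero)+
  then have "real m < sqrt (ln x)" "sqrt (ln x) < real m + 1"
    using real_sqrt_less_mono[of "ln x" "real (Suc m) ^ 2"] by (auto simp: real_less_rsqrt)
  then have "\<lfloor>sqrt (ln x)\<rfloor> = int m"
    by (simp add: floor_eq_iff)
  then show ?thesis
    unfolding block_def by simp
qed

definition deep_in_blocks :: "nat \<Rightarrow> real \<Rightarrow> real set" where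
  "deep_in_blocks n q =
     (\<Union>k. {exp (real (prod_encode (n, k)) ^ 2) / (1 - q) <..< exp (real (Suc (prod_encode (n, k))) ^ 2)})"

lemma deep_in_blocks_subset:
  assumes "q < 1"
  shows "deep_in_blocks n q \<subseteq> {0<..}"
  using assms by (auto simp: deep_in_blocks_def intro: less_trans[rotated])

lemma deep_in_blocks_sets:
  assumes "q < 1"
  shows "deep_in_blocks n q \<in> sets M0"
proof -
  have "deep_in_blocks n q \<in> sets lebesgue"
    unfolding deep_in_blocks_def by (intro sets.countable_UN) auto
  then show ?thesis
    using deep_in_blocks_subset[OF assms] by (simp add: sets_restrict_space_iff)
qed

lemma deep_in_blocksE:
  assumes "x \<in> deep_in_blocks n q" "q < 1"
  obtains c where "0 < c" "c < (1 - q) * x" "\<And>t. t \<in> {c<..<x} \<Longrightarrow> fst (prod_decode (block t)) = n"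
proof -
  obtain k where k: "exp (real (prod_encode (n, k)) ^ 2) / (1 - q) < x"
      "x < exp (real (Suc (prod_encode (n, k))) ^ 2)"
    using assms(1) unfolding deep_in_blocks_def by auto
  show ?thesis
  proof
    show "0 < exp (real (prod_encode (n, k)) ^ 2)"
      by simp
    show "exp (real (prod_encode (n, k)) ^ 2) < (1 - q) * x"
      using k(1) assms(2) by (simp add: field_simps)
    show "fst (prod_decode (block t)) = n" if "t \<in> {exp (real (prod_encode (n, k)) ^ 2)<..<x}" for t
      using that k(2) block_eq[of "prod_encode (n, k)" t] by simp
  qed
qed

lemma emeasure_deep_in_blocks:
  assumes "0 \<le> q" "q < 1"
  shows "emeasure M0 (deep_in_blocks n q) = \<infinity>"
proof -
  have "of_nat j \<le> emeasure lebesgue (deep_in_blocks n q)" for j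
  proof -
    define m where "m = prod_encode (n, j + nat \<lceil>1 / (1 - q)\<rceil>)"
    define c where "c = exp (real m ^ 2)"
    have "real j + 1 / (1 - q) \<le> real m"
      using le_prod_encode_2[of "j + nat \<lceil>1 / (1 - q)\<rceil>" n] unfolding m_def by linarith
    moreover have "2 * real m + 2 \<le> exp (2 * real m + 1)"
      using exp_ge_add_one_self[of "2 * real m + 1"] by simp
    ultimately have length: "real j \<le> exp (2 * real m + 1) - 1 / (1 - q)"
      by linarith
    have "1 \<le> c"
      unfolding c_def by simp
    then have "real j \<le> c * (exp (2 * real m + 1) - 1 / (1 - q))"
      using mult_right_mono[of 1 c "exp (2 * real m + 1) - 1 / (1 - q)"] length by simp
    also have "\<dots> = exp (real (Suc m) ^ 2) - c / (1 - q)"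
      unfolding c_def by (simp add: power2_eq_square algebra_simps flip: exp_add)
    finally have "of_nat j \<le> emeasure lebesgue {c / (1 - q) <..< exp (real (Suc m) ^ 2)}"
      by (simp add: ennreal_of_nat_eq_real_of_nat)
    also have "\<dots> \<le> emeasure lebesgue (deep_in_blocks n q)"
      unfolding deep_in_blocks_def c_def m_def by (intro emeasure_mono) (auto intro: sets.countable_UN)
    finally show ?thesis .
  qed
  then have "emeasure lebesgue (deep_in_blocks n q) = \<infinity>"
    by (rule ennreal_eq_top_if_of_nat_le)
  then show ?thesis
    using deep_in_blocks_sets[OF assms(2)] deep_in_blocks_subset[OF assms(2)]
    by (simp add: emeasure_restrict_space sets_restrict_space_iff)
qed

lemma cesaro_int_le:
  assumes "\<And>t. \<bar>f t\<bar> \<le> C" "0 \<le> x"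
  shows "cesaro_int f x \<le> ennreal (C * x)"
proof -
  have "cesaro_int f x \<le> (\<integral>\<^sup>+ t. ennreal C * indicator {0<..<x} t \<partial>lborel)"
    unfolding cesaro_int_def
    by (intro nn_integral_mono) (auto simp: assms(1) indicator_def ennreal_leI)
  also have "\<dots> = ennreal (C * x)"
    using assms order_trans[OF abs_ge_zero assms(1)] by (simp add: nn_integral_cmult_indicator ennreal_mult)
  finally show ?thesis .
qed

lemma cesaro_finite_if_bounded:
  assumes "\<And>t. \<bar>f t\<bar> \<le> C"
  shows "cesaro_finite f"
  unfolding cesaro_finite_def
proof (intro allI impI)
  fix x :: real
  assume "0 < x"
  then have "cesaro_int f x \<le> ennreal (C * x)"
    by (intro cesaro_int_le assms) simp
  then show "cesaro_int f x < \<infinity>"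
    by (simp add: le_less_trans)
qed

lemma abs_cesaro_le:
  assumes "\<And>t. \<bar>f t\<bar> \<le> C"
  shows "\<bar>cesaro f x\<bar> \<le> C"
proof (cases "0 < x")
  case True
  have "0 \<le> C"
    using order_trans[OF abs_ge_zero assms] .
  then have "enn2real (cesaro_int f x) \<le> C * x"
    using enn2real_mono[OF cesaro_int_le[OF assms] ennreal_less_top] True by simp
  then show ?thesis
    using True by (simp add: cesaro_def field_simps)
next
  case False
  then show ?thesis
    using order_trans[OF abs_ge_zero assms] by (simp add: cesaro_def)
qed

lemma cesaro_ge:
  assumes "cesaro_finite f" "\<And>t. t \<in> {c<..<x} \<Longrightarrow> D \<le> \<bar>f t\<bar>" "0 \<le> D" "0 \<le> c" "c < x"
  shows "D * (x - c) / x \<le> cesaro f x"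
proof -
  have "ennreal (D * (x - c)) = (\<integral>\<^sup>+ t. ennreal D * indicator {c<..<x} t \<partial>lborel)"
    using assms(3,5) by (simp add: nn_integral_cmult_indicator ennreal_mult)
  also have "\<dots> \<le> cesaro_int f x"
    unfolding cesaro_int_def
    using assms(2,4) by (intro nn_integral_mono) (auto simp: indicator_def ennreal_leI)
  finally have "ennreal (D * (x - c)) \<le> cesaro_int f x" .
  moreover have "cesaro_int f x < top"
    using assms(1,4,5) unfolding cesaro_finite_def by simp
  ultimately have "enn2real (ennreal (D * (x - c))) \<le> enn2real (cesaro_int f x)"
    by (rule enn2real_mono)
  then have "D * (x - c) \<le> enn2real (cesaro_int f x)"
    using assms(3,5) by simp
  then show ?thesis
    using assms(4,5) by (simp add: cesaro_def divide_right_mono)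
qed

definition linf_embed :: "real \<Rightarrow> (nat \<Rightarrow> real) \<Rightarrow> rfun" where
  "linf_embed s a x = s * a (fst (prod_decode (block x)))"

lemma linf_embed_in_Mfun: "linf_embed s a \<in> Mfun"
proof -
  have "linf_embed s a \<in> borel_measurable borel"
    unfolding linf_embed_def
    by (rule measurable_compose_countable[where f = "\<lambda>m x. s * a (fst (prod_decode m))"]) auto
  then show ?thesis
    unfolding Mfun_def
    by (intro measurable_restrict_space1 measurable_completion) (simp add: measurable_lborel1)
qed

lemma abs_le_SUP_linf:
  assumes "a \<in> linf"
  shows "\<bar>a n\<bar> \<le> (SUP n. \<bar>a n\<bar>)"
proof -
  obtain B where "\<And>n. \<bar>a n\<bar> \<le> B"
    using assms unfolding linf_def bounded_real by auto
  then show ?thesis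
    by (intro cSUP_upper bdd_aboveI[of _ B]) auto
qed

lemma abs_linf_embed_le:
  assumes "a \<in> linf" "0 \<le> s"
  shows "\<bar>linf_embed s a x\<bar> \<le> s * (SUP n. \<bar>a n\<bar>)"
  unfolding linf_embed_def abs_mult abs_of_nonneg[OF assms(2)]
  by (intro mult_left_mono abs_le_SUP_linf assms)

lemma cesaro_linf_embed_ge:
  assumes "a \<in> linf" "0 \<le> s" "0 \<le> q" "q < 1" "x \<in> deep_in_blocks n q"
  shows "q * (s * \<bar>a n\<bar>) \<le> cesaro (linf_embed s a) x"
proof -
  obtain c where c: "0 < c" "c < (1 - q) * x" "\<And>t. t \<in> {c<..<x} \<Longrightarrow> fst (prod_decode (block t)) = n"
    using deep_in_blocksE[OF assms(5,4)] by blast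
  have "0 < (1 - q) * x"
    using c(1,2) by linarith
  then have "0 < x"
    using assms(4) by (simp add: zero_less_mult_iff)
  have "0 \<le> q * x"
    using assms(3) \<open>0 < x\<close> by simp
  then have "q * x \<le> x - c" "c < x"
    using c(2) by (simp_all add: algebra_simps)
  then have "s * \<bar>a n\<bar> * (q * x) \<le> s * \<bar>a n\<bar> * (x - c)"
    using assms(2) by (intro mult_left_mono) auto
  then have "q * (s * \<bar>a n\<bar>) \<le> s * \<bar>a n\<bar> * (x - c) / x"
    using \<open>0 < x\<close> by (simp add: le_divide_eq mult_ac)
  also have "\<dots> \<le> cesaro (linf_embed s a) x"
  proof (rule cesaro_ge)
    show "cesaro_finite (linf_embed s a)"
      using abs_linf_embed_le[OF assms(1,2)] by (rule cesaro_finite_if_bounded)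
    show "s * \<bar>a n\<bar> \<le> \<bar>linf_embed s a t\<bar>" if "t \<in> {c<..<x}" for t
      using c(3)[OF that] assms(2) by (simp add: linf_embed_def abs_mult)
  qed (use c(1) \<open>c < x\<close> assms(2) in auto)
  finally show ?thesis .
qed

lemma cesaro_linf_embed_in_Mfun:
  assumes "Linf_embeds \<rho>" "cesaro_bounded \<rho>" "a \<in> linf" "0 \<le> s"
  shows "cesaro (linf_embed s a) \<in> Mfun"
proof -
  have "in_X \<rho> (linf_embed s a)"
    using assms(1) linf_embed_in_Mfun abs_linf_embed_le[OF assms(3,4)]
    unfolding Linf_embeds_def in_X_def by blast
  then show ?thesis
    using assms(2) unfolding cesaro_bounded_def by blast
qed

lemma rho_cesaro_linf_embed_le:
  assumes "ri_space \<rho>" "Linf_embeds \<rho>" "cesaro_bounded \<rho>"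
    and "\<rho> (\<lambda>x. 1) = ennreal r" "0 < r" "a \<in> linf"
  shows "\<rho> (cesaro (linf_embed (1 / r) a)) \<le> ennreal (SUP n. \<bar>a n\<bar>)"
proof -
  define M where "M = (SUP n. \<bar>a n\<bar>)"
  have "0 \<le> M"
    unfolding M_def using abs_le_SUP_linf[OF assms(6), of 0] by linarith
  have "\<bar>linf_embed (1 / r) a t\<bar> \<le> M / r" for t
    using abs_linf_embed_le[OF assms(6), of "1 / r"] assms(5) by (simp add: M_def)
  then have "\<rho> (cesaro (linf_embed (1 / r) a)) \<le> \<rho> (\<lambda>x. M / r)"
    using abs_cesaro_le \<open>0 \<le> M\<close> assms(5)
    by (intro ri_space_mono[OF assms(1) cesaro_linf_embed_in_Mfun[OF assms(2,3,6)] const_in_Mfun]) simp_all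
  also have "\<dots> = ennreal M"
    using ri_space_const[OF assms(1)] assms(4,5) \<open>0 \<le> M\<close> by (simp flip: ennreal_mult)
  finally show ?thesis
    unfolding M_def .
qed

lemma rho_cesaro_linf_embed_ge:
  assumes "ri_space \<rho>" "Linf_embeds \<rho>" "cesaro_bounded \<rho>"
    and "\<rho> (\<lambda>x. 1) = ennreal r" "0 < r" "a \<in> linf" "0 < q" "q < 1"
  shows "ennreal (q * \<bar>a n\<bar>) \<le> \<rho> (cesaro (linf_embed (1 / r) a))"
proof -
  let ?B = "deep_in_blocks n q"
  have height: "0 \<le> q * \<bar>a n\<bar> / r"
    using assms(5,7) by simp
  have B: "?B \<in> sets M0" "emeasure M0 ?B = \<infinity>"
    using deep_in_blocks_sets emeasure_deep_in_blocks assms(7,8) by simp_all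
  have Cf: "cesaro (linf_embed (1 / r) a) \<in> Mfun"
    using cesaro_linf_embed_in_Mfun[OF assms(2,3,6)] assms(5) by simp
  have "ennreal (q * \<bar>a n\<bar>) = ennreal (q * \<bar>a n\<bar> / r) * ennreal r"
    using assms(5,7) by (simp flip: ennreal_mult)
  also have "\<dots> = ennreal (q * \<bar>a n\<bar> / r) * \<rho> (indicator ?B)"
    using ri_space_indicator_of_infinite_measure[OF assms(1) B] assms(4) by simp
  also have "\<dots> = \<rho> (\<lambda>x. (q * \<bar>a n\<bar> / r) * indicator ?B x)"
    using ri_space_scale[OF assms(1) indicator_in_Mfun[OF B(1)], of "q * \<bar>a n\<bar> / r"]
    unfolding abs_of_nonneg[OF height] by (rule sym)
  also have "\<dots> \<le> \<rho> (cesaro (linf_embed (1 / r) a))"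
  proof (rule ri_space_mono[OF assms(1) _ Cf])
    show "(\<lambda>x. q * \<bar>a n\<bar> / r * indicator ?B x) \<in> Mfun"
      using indicator_in_Mfun[OF B(1)] unfolding Mfun_def by simp
    show "\<bar>q * \<bar>a n\<bar> / r * indicator ?B x\<bar> \<le> \<bar>cesaro (linf_embed (1 / r) a) x\<bar>" for x
    proof (cases "x \<in> ?B")
      case True
      have "q * (1 / r * \<bar>a n\<bar>) \<le> cesaro (linf_embed (1 / r) a) x"
        using True assms(5,7,8) by (intro cesaro_linf_embed_ge[OF assms(6)]) auto
      then show ?thesis
        using True height by (auto intro: order_trans[OF _ abs_ge_self])
    qed simp
  qed
  finally show ?thesis .
qed

lemma cesaro_norm_linf_embed:
  assumes "ri_space \<rho>" "Linf_embeds \<rho>" "cesaro_bounded \<rho>"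
    and "\<rho> (\<lambda>x. 1) = ennreal r" "0 < r" "a \<in> linf"
  shows "cesaro_norm \<rho> (linf_embed (1 / r) a) = ennreal (SUP n. \<bar>a n\<bar>)"
proof -
  let ?N = "\<rho> (cesaro (linf_embed (1 / r) a))"
  have upper: "?N \<le> ennreal (SUP n. \<bar>a n\<bar>)"
    by (rule rho_cesaro_linf_embed_le[OF assms])
  then have "?N < top"
    by (simp add: le_less_trans)
  then have R: "?N = ennreal (enn2real ?N)"
    by simp
  have "\<bar>a n\<bar> \<le> enn2real ?N" for n
  proof (rule field_le_mult_one_interval)
    fix q :: real
    assume "0 < q" "q < 1"
    then show "q * \<bar>a n\<bar> \<le> enn2real ?N"
      using rho_cesaro_linf_embed_ge[OF assms \<open>0 < q\<close> \<open>q < 1\<close>, of n] R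
      by (metis ennreal_le_iff enn2real_nonneg)
  qed
  then have "(SUP n. \<bar>a n\<bar>) \<le> enn2real ?N"
    by (intro cSUP_least) auto
  then have "?N = ennreal (SUP n. \<bar>a n\<bar>)"
    using upper R by (metis ennreal_leI order_antisym)
  moreover have "cesaro_finite (linf_embed (1 / r) a)"
    using abs_linf_embed_le[OF assms(6), of "1 / r"] assms(5) by (intro cesaro_finite_if_bounded) simp
  ultimately show ?thesis
    by (simp add: cesaro_norm_def)
qed

theorem proposition4p4:
  fixes \<rho> :: "(real \<Rightarrow> real) \<Rightarrow> ennreal"
  assumes "ri_space \<rho>"
    and "fatou_property \<rho>"
    and "Linf_embeds \<rho>"
    and "cesaro_bounded \<rho>"
    and "\<forall>f A. in_X \<rho> f \<and> A \<in> sets lebesgue \<and> A \<subseteq> {0<..} \<and> emeasure lebesgue A < \<infinity>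
              \<longrightarrow> in_Xa \<rho> (\<lambda>x. f x * indicator A x)"
  shows "contains_lattice_isometric_linf \<rho>"
proof -
  have "deep_in_blocks 0 0 \<in> sets M0" "emeasure M0 (deep_in_blocks 0 0) = \<infinity>"
    using deep_in_blocks_sets emeasure_deep_in_blocks by simp_all
  then have "\<rho> (\<lambda>x. 1) \<noteq> 0"
    by (rule ri_space_one_nonzero[OF assms(1)])
  moreover have "\<rho> (\<lambda>x. 1) < \<infinity>"
    by (rule Linf_embeds_const[OF assms(3)])
  ultimately obtain r where r: "\<rho> (\<lambda>x. 1) = ennreal r" "0 < r"
    by (cases "\<rho> (\<lambda>x. 1)") (auto simp: zero_less_iff_neq_zero)
  show ?thesis
    unfolding contains_lattice_isometric_linf_def
  proof (intro exI[of _ "linf_embed (1 / r)"] ballI allI conjI AE_I2)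
    fix a b :: "nat \<Rightarrow> real" and c x :: real
    assume "a \<in> linf"
    show norm: "cesaro_norm \<rho> (linf_embed (1 / r) a) = ennreal (SUP n. \<bar>a n\<bar>)"
      by (rule cesaro_norm_linf_embed[OF assms(1,3,4) r \<open>a \<in> linf\<close>])
    show "in_CX \<rho> (linf_embed (1 / r) a)"
      unfolding in_CX_def norm using linf_embed_in_Mfun by simp
    show "linf_embed (1 / r) (\<lambda>n. a n + b n) x = linf_embed (1 / r) a x + linf_embed (1 / r) b x"
      and "linf_embed (1 / r) (\<lambda>n. c * a n) x = c * linf_embed (1 / r) a x"
      and "linf_embed (1 / r) (\<lambda>n. max (a n) (b n)) x = max (linf_embed (1 / r) a x) (linf_embed (1 / r) b x)"
      using r(2) by (simp_all add: linf_embed_def distrib_left mult.left_commute max_mult_distrib_left)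
  qed
qed

end
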